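(* Let $\mathcal H=\mathbb{C}^2\otimes\mathbb{C}^2$ with the Bell vectors $\psi_1=\tfrac{1}{\sqrt2}(|0\rangle|0\rangle+|1\rangle|1\rangle)$, $\psi_2=\tfrac{1}{\sqrt2}(|0\rangle|0\rangle-|1\rangle|1\rangle)$, $\psi_3=\tfrac{1}{\sqrt2}(|0\rangle|1\rangle+|1\rangle|0\rangle)$, $\psi_4=\tfrac{1}{\sqrt2}(|0\rangle|1\rangle-|1\rangle|0\rangle)$, let $\Psi_k$ be the orthogonal projector onto $\mathbb{C}\psi_k$, $\Phi_{kl}=\tfrac12(\Psi_k+\Psi_l)$, and for $\epsilon\in[0,1]$ let $W_{\psi_k,\epsilon}=\tfrac14(1-\epsilon)\mathbf 1+\epsilon\Psi_k$. Fix an index $i\in\{1,2,3,4\}$ and numbers $\lambda_1,\dots,\lambda_4\ge 0$ with $\sum_k\lambda_k=1$, and let $$\sigma=\lambda_i\Psi_i+\sum_{j\neq i}\lambda_j\Phi_{ij}.$$ Then the state $$\tilde\sigma=\lambda_i W_{\psi_i,1/3}+\sum_{j\ne i}\lambda_j\Phi_{ij}$$ belongs to $\mathcal D$ and minimizes $\rho\mapsto\|\rho-\sigma\|_{\mathrm{HS}}^2$ over $\rho\in\mathcal D$, and $$E_{\mathrm{HS}}(\sigma)=\lambda_i^2/3.$$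
   Context: $\mathcal T$ denotes the set of states (positive operators of trace one) on $\mathbb{C}^2\otimes\mathbb{C}^2$. The set of disentangled states is $\mathcal D=\{\rho\in\mathcal T:\rho=\sum_k p_k\rho^{(1)}_k\otimes\rho^{(2)}_k,\ p_k\ge0,\ \sum_k p_k=1,\ \rho^{(1)}_k,\rho^{(2)}_k \text{ states on }\mathbb{C}^2\}$. The Hilbert–Schmidt norm is $\|A\|_{\mathrm{HS}}^2=\mathrm{tr}(A^*A)$, and the Hilbert–Schmidt entanglement of a state $\sigma$ is $E_{\mathrm{HS}}(\sigma)=\min_{\rho\in\mathcal D}\|\rho-\sigma\|_{\mathrm{HS}}^2$. *)

theory Defs
  imports "HOL-Analysis.Analysis"
begin

text \<open>Operators on C^2 are matrices complex^2^2 (basis |0>,|1> = indices 0,1 of the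
numeral type 2); operators on C^2 (x) C^2 are matrices indexed by the product type 2 \<times> 2,
with basis |a>|b> = (a,b).\<close>

type_synonym qubit_op = "complex^2^2"
type_synonym vec2 = "complex^(2 \<times> 2)"
type_synonym op2 = "complex^(2 \<times> 2)^(2 \<times> 2)"

definition mtrace :: "complex^'n^'n \<Rightarrow> complex" where
  "mtrace A = (\<Sum>i\<in>UNIV. A $ i $ i)"

definition positive_op :: "complex^'n^'n \<Rightarrow> bool" where
  "positive_op A \<longleftrightarrow> (\<forall>v::complex^'n.
      let q = (\<Sum>i\<in>UNIV. cnj (v $ i) * (\<Sum>j\<in>UNIV. A $ i $ j * v $ j))
      in Im q = 0 \<and> Re q \<ge> 0)"

definition is_state :: "complex^'n^'n \<Rightarrow> bool" where
  "is_state A \<longleftrightarrow> positive_op A \<and> mtrace A = 1"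

definition kron :: "qubit_op \<Rightarrow> qubit_op \<Rightarrow> op2" where
  "kron A B = (\<chi> i j. A $ fst i $ fst j * B $ snd i $ snd j)"

definition disentangled :: "op2 \<Rightarrow> bool" where
  "disentangled \<rho> \<longleftrightarrow> is_state \<rho> \<and>
     (\<exists>(n::nat) (p::nat \<Rightarrow> real) (r1::nat \<Rightarrow> qubit_op) (r2::nat \<Rightarrow> qubit_op).
        (\<forall>k<n. p k \<ge> 0 \<and> is_state (r1 k) \<and> is_state (r2 k)) \<and>
        (\<Sum>k<n. p k) = 1 \<and>
        \<rho> = (\<Sum>k<n. p k *\<^sub>R kron (r1 k) (r2 k)))"

definition hs_sq :: "complex^'n^'m \<Rightarrow> real" where
  "hs_sq A = (\<Sum>i\<in>UNIV. \<Sum>j\<in>UNIV. (cmod (A $ i $ j))\<^sup>2)"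

definition E_HS :: "op2 \<Rightarrow> real" where
  "E_HS \<sigma> = (INF \<rho>\<in>{\<rho>. disentangled \<rho>}. hs_sq (\<rho> - \<sigma>))"

definition bell :: "nat \<Rightarrow> vec2" where
  "bell k = (\<chi> ab. let a = fst ab; b = snd ab in
     (if k = 1 then (if a = 0 \<and> b = 0 then 1 else if a = 1 \<and> b = 1 then 1 else 0)
      else if k = 2 then (if a = 0 \<and> b = 0 then 1 else if a = 1 \<and> b = 1 then -1 else 0)
      else if k = 3 then (if a = 0 \<and> b = 1 then 1 else if a = 1 \<and> b = 0 then 1 else 0)
      else if k = 4 then (if a = 0 \<and> b = 1 then 1 else if a = 1 \<and> b = 0 then -1 else 0)
      else 0) / complex_of_real (sqrt 2))"

definition proj :: "vec2 \<Rightarrow> op2" where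
  "proj \<psi> = (\<chi> x y. \<psi> $ x * cnj (\<psi> $ y))"

definition Psi :: "nat \<Rightarrow> op2" where
  "Psi k = proj (bell k)"

definition Phi :: "nat \<Rightarrow> nat \<Rightarrow> op2" where
  "Phi k l = (1/2) *\<^sub>R (Psi k + Psi l)"

definition Werner :: "nat \<Rightarrow> real \<Rightarrow> op2" where
  "Werner k \<epsilon> = ((1 - \<epsilon>) / 4) *\<^sub>R mat 1 + \<epsilon> *\<^sub>R Psi k"

end

theory Submission
  imports Defs
begin

text \<open>
  The four Bell projectors sum to the identity, so \<open>W(\<psi>_i, 1/3) = (1/3) \<Sum>_{j \<noteq> i} \<Phi>_ij\<close>.
  Hence \<open>\<sigma>'\<close> is a convex combination of the states \<open>\<Phi>_kl\<close> with \<open>k \<noteq> l\<close>, each of which is an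
  equal mixture of two product states, and \<open>\<sigma>' - \<sigma> = \<lambda>_i (W(\<psi>_i, 1/3) - \<Psi>_i)\<close> has squared
  Hilbert-Schmidt norm \<open>\<lambda>_i\<^sup>2 / 3\<close>.

  For the lower bound let \<open>x_k = \<langle>\<psi>_k, (\<rho> - \<sigma>) \<psi>_k\<rangle>\<close> with \<open>\<rho>\<close> separable. A qubit computation
  with AM-GM gives \<open>\<langle>\<psi>_k, \<rho> \<psi>_k\<rangle> \<le> 1/2\<close> for product states, hence by convexity for all
  separable \<open>\<rho>\<close>; as \<open>\<langle>\<psi>_i, \<sigma> \<psi>_i\<rangle> = (1 + \<lambda>_i) / 2\<close>, this means \<open>x_i \<le> -\<lambda>_i / 2\<close>. Moreover
  \<open>\<Sum>_k x_k = tr (\<rho> - \<sigma>) = 0\<close> and \<open>\<Sum>_k x_k\<^sup>2 \<le> \<parallel>\<rho> - \<sigma>\<parallel>\<^sup>2\<close>. Cauchy-Schwarz applied to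
  \<open>x_i = - \<Sum>_{k \<noteq> i} x_k\<close> yields \<open>\<Sum>_k x_k\<^sup>2 \<ge> (4/3) x_i\<^sup>2 \<ge> \<lambda>_i\<^sup>2 / 3\<close>.
\<close>

section \<open>Positive operators\<close>

definition qform :: "complex^'n^'n \<Rightarrow> complex^'n \<Rightarrow> complex" where
  "qform A v = (\<Sum>i\<in>UNIV. cnj (v $ i) * (\<Sum>j\<in>UNIV. A $ i $ j * v $ j))"

lemma scaleR_matrix_nth: "((c::real) *\<^sub>R (M::complex^'n^'m)) $ i $ j = of_real c * M $ i $ j"
  unfolding vector_scaleR_component by (simp add: scaleR_conv_of_real)

lemma linear_qform: "linear (\<lambda>A. qform A v)"
  by (rule linearI)
    (simp_all add: qform_def scaleR_matrix_nth algebra_simps sum.distrib sum_distrib_left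
      scaleR_conv_of_real[where 'a=complex])

lemma sum_UNIV_two_support:
  fixes f :: "'n::finite \<Rightarrow> 'a::comm_monoid_add"
  assumes "i \<noteq> j" "\<And>k. k \<noteq> i \<Longrightarrow> k \<noteq> j \<Longrightarrow> f k = 0"
  shows "sum f UNIV = f i + f j"
proof -
  have "sum f UNIV = sum f {i, j}"
    by (rule sum.mono_neutral_right) (use assms(2) in auto)
  then show ?thesis using assms(1) by simp
qed

lemma qform_axis: "qform A (axis i a) = cnj a * A $ i $ i * a"
proof -
  have "qform A (axis i a) = cnj a * (\<Sum>j\<in>UNIV. A $ i $ j * axis i a $ j)"
    unfolding qform_def by (subst sum.remove[of _ i]) (auto simp: axis_def)
  also have "\<dots> = cnj a * (A $ i $ i * a)"
    by (subst sum.remove[of _ i]) (auto simp: axis_def)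
  finally show ?thesis by (simp add: mult.assoc)
qed

lemma qform_two_axes:
  assumes "i \<noteq> j"
  shows "qform A (axis i a + axis j b)
    = cnj a * (A$i$i * a + A$i$j * b) + cnj b * (A$j$i * a + A$j$j * b)"
proof -
  have "(\<Sum>l\<in>UNIV. A $ k $ l * (axis i a + axis j b) $ l) = A$k$i * a + A$k$j * b" for k
    by (subst sum_UNIV_two_support[OF assms]) (use assms in \<open>auto simp: axis_def\<close>)
  then show ?thesis
    unfolding qform_def by (subst sum_UNIV_two_support[OF assms]) (use assms in \<open>auto simp: axis_def\<close>)
qed

lemma positive_op_iff_qform:
  "positive_op A \<longleftrightarrow> (\<forall>v. Im (qform A v) = 0 \<and> 0 \<le> Re (qform A v))"
  by (simp add: positive_op_def qform_def Let_def)

lemma positive_op_diag: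
  assumes "positive_op A"
  shows "Im (A $ i $ i) = 0" "0 \<le> Re (A $ i $ i)"
  using assms[unfolded positive_op_iff_qform, rule_format, of "axis i 1"]
  by (simp_all add: qform_axis complex_eq_iff)

lemma positive_op_hermitian:
  assumes "positive_op A"
  shows "A $ j $ i = cnj (A $ i $ j)"
proof (cases "i = j")
  case True
  then show ?thesis using positive_op_diag(1)[OF assms, of i] by (simp add: complex_eq_iff)
next
  case False
  have q: "Im (qform A v) = 0" for v using assms by (simp add: positive_op_iff_qform)
  have "Im (A$i$j) + Im (A$j$i) = 0" "Re (A$i$j) - Re (A$j$i) = 0"
    using q[of "axis i 1 + axis j 1"] q[of "axis i 1 + axis j \<i>"]
      positive_op_diag(1)[OF assms, of i] positive_op_diag(1)[OF assms, of j]
    by (simp_all add: qform_two_axes[OF False] complex_eq_iff)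
  then show ?thesis by (simp add: complex_eq_iff)
qed

lemma positive_op_offdiag_le:
  assumes "positive_op A"
  shows "(cmod (A $ i $ j))\<^sup>2 \<le> Re (A $ i $ i) * Re (A $ j $ j)"
proof (cases "i = j")
  case True
  then show ?thesis using positive_op_diag(1)[OF assms, of i]
    unfolding cmod_power2 by (simp add: power2_eq_square)
next
  case False
  define a d z where "a = Re (A$i$i)" and "d = Re (A$j$j)" and "z = A$i$j"
  have A: "A$i$i = of_real a" "A$j$j = of_real d" "A$i$j = z" "A$j$i = cnj z"
    using positive_op_diag(1)[OF assms, of i] positive_op_diag(1)[OF assms, of j]
      positive_op_hermitian[OF assms, of i j]
    by (simp_all add: a_def d_def z_def complex_eq_iff)
  have q: "0 \<le> Re (qform A (axis i x + axis j y))" for x y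
    using assms by (simp add: positive_op_iff_qform)
  \<comment> \<open>The third test vector settles the degenerate case \<open>a = d = 0\<close>.\<close>
  have "Re (qform A (axis i (of_real d) + axis j (- cnj z))) = d * (a * d - (cmod z)\<^sup>2)"
       "Re (qform A (axis i (- z) + axis j (of_real a))) = a * (a * d - (cmod z)\<^sup>2)"
       "Re (qform A (axis i 1 + axis j (- cnj z))) = a + (d - 2) * (cmod z)\<^sup>2"
    by (simp_all add: qform_two_axes[OF False] A cmod_power2[unfolded power2_eq_square]
        power2_eq_square algebra_simps)
  then have "0 \<le> d * (a * d - (cmod z)\<^sup>2)" "0 \<le> a * (a * d - (cmod z)\<^sup>2)"
      "0 \<le> a + (d - 2) * (cmod z)\<^sup>2"
    using q by metis+
  moreover have "0 \<le> a" "0 \<le> d"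
    using positive_op_diag(2)[OF assms] by (simp_all add: a_def d_def)
  ultimately have "(cmod z)\<^sup>2 \<le> a * d"
  proof (cases "a = 0 \<and> d = 0")
    case True
    with \<open>0 \<le> a + (d - 2) * (cmod z)\<^sup>2\<close> show ?thesis by simp
  next
    case False
    with \<open>0 \<le> a\<close> \<open>0 \<le> d\<close> have "0 < a \<or> 0 < d" by linarith
    with \<open>0 \<le> d * (a * d - (cmod z)\<^sup>2)\<close> \<open>0 \<le> a * (a * d - (cmod z)\<^sup>2)\<close>
    show ?thesis by (meson diff_ge_0_iff_ge zero_le_mult_iff not_le)
  qed
  then show ?thesis by (simp add: a_def d_def z_def)
qed

lemma linear_mtrace: "linear mtrace"
  by (rule linearI)
    (simp_all add: mtrace_def scaleR_matrix_nth sum.distrib sum_distrib_left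
      scaleR_conv_of_real[where 'a=complex])

lemma Re_mtrace_add: "Re (mtrace (A + B)) = Re (mtrace A) + Re (mtrace B)"
  by (simp add: linear_add[OF linear_mtrace])

lemma Re_mtrace_scaleR: "Re (mtrace (c *\<^sub>R A)) = c * Re (mtrace A)"
  by (simp add: linear_scale[OF linear_mtrace])

lemma Re_mtrace_sum: "Re (mtrace (\<Sum>j\<in>S. M j)) = (\<Sum>j\<in>S. Re (mtrace (M j)))"
  by (simp add: linear_sum[OF linear_mtrace])

lemma convex_states: "convex {A :: complex^'n^'n. is_state A}"
proof (rule convexI, clarsimp)
  fix A B :: "complex^'n^'n" and u v :: real
  assume A: "is_state A" and B: "is_state B" and "0 \<le> u" "0 \<le> v" "u + v = 1"
  have "qform (u *\<^sub>R A + v *\<^sub>R B) w = u *\<^sub>R qform A w + v *\<^sub>R qform B w" for w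
    by (simp add: linear_add[OF linear_qform] linear_scale[OF linear_qform])
  then have "positive_op (u *\<^sub>R A + v *\<^sub>R B)"
    using A B \<open>0 \<le> u\<close> \<open>0 \<le> v\<close> by (simp add: is_state_def positive_op_iff_qform)
  moreover have "mtrace (u *\<^sub>R A + v *\<^sub>R B) = 1"
    using A B \<open>u + v = 1\<close>
    by (simp add: is_state_def linear_add[OF linear_mtrace] linear_scale[OF linear_mtrace]
        scaleR_conv_of_real[where 'a=complex] flip: of_real_add)
  ultimately show "is_state (u *\<^sub>R A + v *\<^sub>R B)" by (simp add: is_state_def)
qed

section \<open>Pure states and separable states\<close>

definition braket :: "complex^'n \<Rightarrow> complex^'n \<Rightarrow> complex" where
  "braket u v = (\<Sum>i\<in>UNIV. cnj (u $ i) * v $ i)"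

definition outer :: "complex^'n \<Rightarrow> complex^'n^'n" where
  "outer u = (\<chi> x y. u $ x * cnj (u $ y))"

definition tensor :: "complex^'m \<Rightarrow> complex^'n \<Rightarrow> complex^('m \<times> 'n)" where
  "tensor u w = (\<chi> ab. u $ fst ab * w $ snd ab)"

lemma qform_outer: "qform (outer u) v = of_real ((cmod (braket u v))\<^sup>2)"
proof -
  have "(\<Sum>j\<in>UNIV. outer u $ i $ j * v $ j) = u $ i * braket u v" for i
    by (simp add: outer_def braket_def sum_distrib_left mult_ac)
  then have "qform (outer u) v = (\<Sum>i\<in>UNIV. cnj (v $ i) * u $ i) * braket u v"
    unfolding qform_def by (simp add: sum_distrib_right mult.assoc)
  also have "(\<Sum>i\<in>UNIV. cnj (v $ i) * u $ i) = cnj (braket u v)"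
    by (simp add: braket_def mult.commute)
  finally show ?thesis by (simp add: complex_norm_square mult.commute del: of_real_power)
qed

lemma mtrace_outer: "mtrace (outer u) = braket u u"
  by (simp add: mtrace_def outer_def braket_def mult.commute)

lemma is_state_outer: "braket u u = 1 \<Longrightarrow> is_state (outer u)"
  by (simp add: is_state_def positive_op_iff_qform qform_outer mtrace_outer)

lemma braket_tensor: "braket (tensor u v) (tensor u' v') = braket u u' * braket v v'"
  by (simp add: braket_def tensor_def sum_product UNIV_Times_UNIV[symmetric] sum.cartesian_product
      prod.case_eq_if mult_ac del: UNIV_Times_UNIV)

lemma kron_outer: "kron (outer u) (outer w) = outer (tensor u w)"
  by (simp add: vec_eq_iff kron_def outer_def tensor_def mult_ac)

definition product_states :: "op2 set" where
  "product_states = {kron A B | A B. is_state A \<and> is_state B}"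

lemma disentangled_iff_convex_hull:
  "disentangled \<rho> \<longleftrightarrow> is_state \<rho> \<and> \<rho> \<in> convex hull product_states"
proof -
  have "(\<exists>(n::nat) p r1 r2. (\<forall>k<n. 0 \<le> p k \<and> is_state (r1 k) \<and> is_state (r2 k)) \<and>
          sum p {..<n} = 1 \<and> \<rho> = (\<Sum>k<n. p k *\<^sub>R kron (r1 k) (r2 k)))
        \<longleftrightarrow> \<rho> \<in> convex hull product_states" (is "?sum \<longleftrightarrow> _")
  proof
    assume ?sum
    then obtain n :: nat and p r1 r2
      where prs: "\<forall>k<n. 0 \<le> p k \<and> is_state (r1 k) \<and> is_state (r2 k)" "sum p {..<n} = 1"
        and \<rho>: "\<rho> = (\<Sum>k<n. p k *\<^sub>R kron (r1 k) (r2 k))"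
      by blast
    show "\<rho> \<in> convex hull product_states"
      unfolding \<rho>
      by (rule convex_sum) (use prs in \<open>auto intro: hull_inc simp: product_states_def\<close>)
  next
    assume "\<rho> \<in> convex hull product_states"
    then obtain n :: nat and u x where ux: "\<forall>i\<in>{1..n}. 0 \<le> u i \<and> x i \<in> product_states"
      "sum u {1..n} = 1" "\<rho> = (\<Sum>i=1..n. u i *\<^sub>R x i)"
      unfolding convex_hull_indexed by blast
    have "\<forall>i\<in>{1..n}. \<exists>r. is_state (fst r) \<and> is_state (snd r) \<and> x i = kron (fst r) (snd r)"
      using ux(1) by (force simp: product_states_def)
    then obtain r :: "nat \<Rightarrow> qubit_op \<times> qubit_op"
      where r: "\<forall>i\<in>{1..n}. is_state (fst (r i)) \<and> is_state (snd (r i))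
                  \<and> x i = kron (fst (r i)) (snd (r i))"
      by metis
    define p r1 r2
      where "p k = u (Suc k)" and "r1 k = fst (r (Suc k))" and "r2 k = snd (r (Suc k))" for k
    have "\<forall>k<n. 0 \<le> p k \<and> is_state (r1 k) \<and> is_state (r2 k)"
      using ux(1) r by (auto simp: p_def r1_def r2_def)
    moreover have "sum p {..<n} = 1"
      using ux(2) by (simp add: p_def sum.atLeast1_atMost_eq)
    moreover have "\<rho> = (\<Sum>k<n. p k *\<^sub>R kron (r1 k) (r2 k))"
      using ux(3) r by (simp add: p_def r1_def r2_def sum.atLeast1_atMost_eq)
    ultimately show ?sum by blast
  qed
  then show ?thesis by (simp add: disentangled_def)
qed

lemma convex_disentangled: "convex {\<rho>. disentangled \<rho>}"
proof -
  have "{\<rho>. disentangled \<rho>} = {\<rho>. is_state \<rho>} \<inter> convex hull product_states"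
    by (auto simp: disentangled_iff_convex_hull)
  then show ?thesis by (simp add: convex_Int convex_states)
qed

lemma disentangled_convex_sum:
  assumes "finite S" "\<And>j. j \<in> S \<Longrightarrow> 0 \<le> w j" "sum w S = 1"
    and "\<And>j. j \<in> S \<Longrightarrow> disentangled (M j)"
  shows "disentangled (\<Sum>j\<in>S. w j *\<^sub>R M j)"
  using convex_sum[OF assms(1) convex_disentangled, of w M] assms(2-4) by simp

lemma disentangled_midpoint:
  "disentangled X \<Longrightarrow> disentangled Y \<Longrightarrow> disentangled ((1/2) *\<^sub>R (X + Y))"
  using convexD[OF convex_disentangled, of X Y "1/2" "1/2"] by (simp add: scaleR_add_right)

lemma disentangled_kron_outer:
  assumes "braket u u = 1" "braket w w = 1"
  shows "disentangled (kron (outer u) (outer w))"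
  unfolding disentangled_iff_convex_hull
proof
  show "is_state (kron (outer u) (outer w))"
    using assms by (simp add: kron_outer is_state_outer braket_tensor)
  show "kron (outer u) (outer w) \<in> convex hull product_states"
    unfolding product_states_def using assms is_state_outer by (intro hull_inc) blast
qed

section \<open>Bell projectors and their mixtures\<close>

lemma UNIV_2_eq: "(UNIV :: 2 set) = {0, 1}"
  using exhaust_2 by (metis UNIV_2 zero_neq_one insert_commute)

lemma UNIV_2x2_eq: "(UNIV :: (2 \<times> 2) set) = {(0,0), (0,1), (1,0), (1,1)}"
  by (auto simp: UNIV_Times_UNIV[symmetric] UNIV_2_eq simp del: UNIV_Times_UNIV)

lemma forall_2_zero_one: "(\<forall>i :: 2. P i) \<longleftrightarrow> P 0 \<and> P 1"
  by (metis UNIV_2_eq UNIV_I insertE singletonD)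

lemma atLeast1_atMost4_eq: "{1..4::nat} = {1, 2, 3, 4}"
  by auto

lemma sqrt2_sq: "complex_of_real (sqrt 2) * complex_of_real (sqrt 2) = 2"
  by (simp flip: of_real_mult)

lemma div_sqrt2_mult: "a / complex_of_real (sqrt 2) * (b / complex_of_real (sqrt 2)) = a * b / 2"
  by (simp add: sqrt2_sq)

definition ket :: "complex \<Rightarrow> complex \<Rightarrow> complex^2" where
  "ket a b = (\<chi> j. if j = 0 then a else b)"

definition equator_ket :: "complex \<Rightarrow> complex^2" where
  "equator_ket c = ket (1 / sqrt 2) (c / sqrt 2)"

lemma braket_ket: "braket (ket a b) (ket a b) = of_real ((cmod a)\<^sup>2 + (cmod b)\<^sup>2)"
  by (simp add: braket_def ket_def UNIV_2_eq complex_norm_square mult.commute del: of_real_power)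

lemma braket_equator_ket: "cmod c = 1 \<Longrightarrow> braket (equator_ket c) (equator_ket c) = 1"
  by (simp add: equator_ket_def braket_ket norm_divide power_divide)

lemma Psi_nth: "Psi k $ x $ y = bell k $ x * cnj (bell k $ y)"
  by (simp add: Psi_def proj_def)

lemma Phi_sym: "Phi k l = Phi l k"
  by (simp add: Phi_def add.commute)

text \<open>Each \<open>Phi k l\<close> is the equal mixture of two product states built from one eigenbasis
  of the Pauli matrix \<open>Z\<close>, \<open>X\<close> or \<open>Y\<close>.\<close>

lemma Phi_1_2:
  "Phi 1 2 = (1/2) *\<^sub>R (kron (outer (ket 1 0)) (outer (ket 1 0)) + kron (outer (ket 0 1)) (outer (ket 0 1)))"
  unfolding vec_eq_iff split_paired_All forall_2_zero_one
  by (simp add: Phi_def Psi_nth bell_def kron_def outer_def ket_def equator_ket_def scaleR_matrix_nth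
      div_sqrt2_mult sqrt2_sq)

lemma Phi_1_3:
  "Phi 1 3 = (1/2) *\<^sub>R (kron (outer (equator_ket 1)) (outer (equator_ket 1)) + kron (outer (equator_ket (-1))) (outer (equator_ket (-1))))"
  unfolding vec_eq_iff split_paired_All forall_2_zero_one
  by (simp add: Phi_def Psi_nth bell_def kron_def outer_def ket_def equator_ket_def scaleR_matrix_nth
      div_sqrt2_mult sqrt2_sq)

lemma Phi_1_4:
  "Phi 1 4 = (1/2) *\<^sub>R (kron (outer (equator_ket \<i>)) (outer (equator_ket (-\<i>))) + kron (outer (equator_ket (-\<i>))) (outer (equator_ket \<i>)))"
  unfolding vec_eq_iff split_paired_All forall_2_zero_one
  by (simp add: Phi_def Psi_nth bell_def kron_def outer_def ket_def equator_ket_def scaleR_matrix_nth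
      div_sqrt2_mult sqrt2_sq)

lemma Phi_2_3:
  "Phi 2 3 = (1/2) *\<^sub>R (kron (outer (equator_ket \<i>)) (outer (equator_ket \<i>)) + kron (outer (equator_ket (-\<i>))) (outer (equator_ket (-\<i>))))"
  unfolding vec_eq_iff split_paired_All forall_2_zero_one
  by (simp add: Phi_def Psi_nth bell_def kron_def outer_def ket_def equator_ket_def scaleR_matrix_nth
      div_sqrt2_mult sqrt2_sq)

lemma Phi_2_4:
  "Phi 2 4 = (1/2) *\<^sub>R (kron (outer (equator_ket (-1))) (outer (equator_ket 1)) + kron (outer (equator_ket 1)) (outer (equator_ket (-1))))"
  unfolding vec_eq_iff split_paired_All forall_2_zero_one
  by (simp add: Phi_def Psi_nth bell_def kron_def outer_def ket_def equator_ket_def scaleR_matrix_nth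
      div_sqrt2_mult sqrt2_sq)

lemma Phi_3_4:
  "Phi 3 4 = (1/2) *\<^sub>R (kron (outer (ket 1 0)) (outer (ket 0 1)) + kron (outer (ket 0 1)) (outer (ket 1 0)))"
  unfolding vec_eq_iff split_paired_All forall_2_zero_one
  by (simp add: Phi_def Psi_nth bell_def kron_def outer_def ket_def equator_ket_def scaleR_matrix_nth
      div_sqrt2_mult sqrt2_sq)

lemma disentangled_Phi:
  assumes "k \<in> {1..4}" "l \<in> {1..4}" "k \<noteq> l"
  shows "disentangled (Phi k l)"
proof -
  have kets: "braket (ket 1 0) (ket 1 0) = 1" "braket (ket 0 1) (ket 0 1) = 1"
    by (simp_all add: braket_ket)
  have "disentangled (Phi 1 2)" "disentangled (Phi 1 3)" "disentangled (Phi 1 4)"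
       "disentangled (Phi 2 3)" "disentangled (Phi 2 4)" "disentangled (Phi 3 4)"
  proof -
    have e: "braket (equator_ket c) (equator_ket c) = 1" if "c \<in> {1, -1, \<i>, -\<i>}" for c
      using that by (auto intro: braket_equator_ket)
    show "disentangled (Phi 1 2)" unfolding Phi_1_2
      by (intro disentangled_midpoint disentangled_kron_outer kets)
    show "disentangled (Phi 3 4)" unfolding Phi_3_4
      by (intro disentangled_midpoint disentangled_kron_outer kets)
    show "disentangled (Phi 1 3)" unfolding Phi_1_3
      by (intro disentangled_midpoint disentangled_kron_outer e) simp_all
    show "disentangled (Phi 1 4)" unfolding Phi_1_4
      by (intro disentangled_midpoint disentangled_kron_outer e) simp_all
    show "disentangled (Phi 2 3)" unfolding Phi_2_3
      by (intro disentangled_midpoint disentangled_kron_outer e) simp_all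
    show "disentangled (Phi 2 4)" unfolding Phi_2_4
      by (intro disentangled_midpoint disentangled_kron_outer e) simp_all
  qed
  moreover have "(k, l) \<in> {(1,2), (1,3), (1,4), (2,3), (2,4), (3,4)}
      \<or> (l, k) \<in> {(1,2), (1,3), (1,4), (2,3), (2,4), (3,4)}"
    using assms unfolding atLeast1_atMost4_eq by auto
  ultimately show ?thesis using Phi_sym[of k l] by auto
qed

lemma sum_Psi: "(\<Sum>k\<in>{1..4}. Psi k) = mat 1"
  unfolding atLeast1_atMost4_eq vec_eq_iff split_paired_All forall_2_zero_one
  by (simp add: Psi_nth bell_def mat_def div_sqrt2_mult sqrt2_sq)

lemma Werner_third_eq:
  assumes "i \<in> {1..4}"
  shows "Werner i (1/3) = (1/3) *\<^sub>R (\<Sum>j\<in>{1..4}-{i}. Phi i j)"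
proof -
  define S where "S = {1..4::nat} - {i}"
  have card: "card S = 3"
    using assms by (simp add: S_def card_Diff_singleton)
  have "mat 1 = Psi i + sum Psi S"
    using assms sum.remove[of "{1..4}" i Psi] sum_Psi by (simp add: S_def)
  then have Phi_sum: "(\<Sum>j\<in>S. Phi i j) = (1/2) *\<^sub>R (3 *\<^sub>R Psi i + (mat 1 - Psi i))"
    by (simp add: Phi_def sum.distrib sum_constant_scaleR card del: sum_constant flip: scaleR_sum_right)
  show ?thesis
    unfolding S_def[symmetric] Phi_sum
    by (simp add: Werner_def algebra_simps) (simp flip: scaleR_add_left)
qed

lemma hs_sq_scaleR: "hs_sq (c *\<^sub>R M) = c\<^sup>2 * hs_sq M"
  by (simp add: hs_sq_def scaleR_matrix_nth norm_mult power_mult_distrib sum_distrib_left)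

lemma hs_sq_Werner_third_minus_Psi:
  assumes "i \<in> {1..4}"
  shows "hs_sq (Werner i (1/3) - Psi i) = 1/3"
proof -
  have "i = 1 \<or> i = 2 \<or> i = 3 \<or> i = 4" using assms by auto
  then show ?thesis
    by (elim disjE) (simp_all add: hs_sq_def UNIV_2x2_eq Werner_def Psi_nth bell_def mat_def
        scaleR_conv_of_real[where 'a=complex] div_sqrt2_mult sqrt2_sq mult.assoc[symmetric]
        norm_divide power_divide)
qed

section \<open>Overlaps with the Bell vectors\<close>

definition bell_overlap :: "nat \<Rightarrow> op2 \<Rightarrow> real" where
  "bell_overlap k D = Re (qform D (bell k))"

lemma linear_bell_overlap: "linear (bell_overlap k)"
  by (rule linearI)
    (simp_all add: bell_overlap_def linear_add[OF linear_qform] linear_scale[OF linear_qform])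

text \<open>The proofs that use the following equations delete \<open>One_nat_def\<close>, which would otherwise
  rewrite \<open>bell_overlap 1\<close> to \<open>bell_overlap (Suc 0)\<close> before they can apply.\<close>

lemma bell_overlap_eq:
  "bell_overlap 1 D = Re (D$(0,0)$(0,0) + D$(0,0)$(1,1) + D$(1,1)$(0,0) + D$(1,1)$(1,1)) / 2"
  "bell_overlap 2 D = Re (D$(0,0)$(0,0) - D$(0,0)$(1,1) - D$(1,1)$(0,0) + D$(1,1)$(1,1)) / 2"
  "bell_overlap 3 D = Re (D$(0,1)$(0,1) + D$(0,1)$(1,0) + D$(1,0)$(0,1) + D$(1,0)$(1,0)) / 2"
  "bell_overlap 4 D = Re (D$(0,1)$(0,1) - D$(0,1)$(1,0) - D$(1,0)$(0,1) + D$(1,0)$(1,0)) / 2"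
  by (simp_all add: bell_overlap_def qform_def UNIV_2x2_eq bell_def div_sqrt2_mult sqrt2_sq
      algebra_simps)

lemma bell_overlap_Psi:
  assumes "j \<in> {1..4}" "k \<in> {1..4}"
  shows "bell_overlap k (Psi j) = (if k = j then 1 else 0)"
proof -
  have "j = 1 \<or> j = 2 \<or> j = 3 \<or> j = 4" "k = 1 \<or> k = 2 \<or> k = 3 \<or> k = 4"
    using assms by auto
  then show ?thesis
    by (elim disjE)
      (simp_all add: bell_overlap_eq Psi_nth bell_def div_sqrt2_mult sqrt2_sq del: One_nat_def)
qed

lemma bell_overlap_Phi:
  assumes "i \<in> {1..4}" "j \<in> {1..4}" "i \<noteq> j"
  shows "bell_overlap i (Phi i j) = 1/2"
  using assms
  by (simp add: Phi_def linear_scale[OF linear_bell_overlap] linear_add[OF linear_bell_overlap]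
      bell_overlap_Psi)

lemma sum_bell_overlap: "(\<Sum>k\<in>{1..4}. bell_overlap k D) = Re (mtrace D)"
  unfolding atLeast1_atMost4_eq
  by (simp add: bell_overlap_eq mtrace_def UNIV_2x2_eq field_simps del: One_nat_def)

lemma Re_mtrace_Psi:
  assumes "k \<in> {1..4}"
  shows "Re (mtrace (Psi k)) = 1"
proof -
  have "Re (mtrace (Psi k)) = (\<Sum>j\<in>{1..4}. bell_overlap j (Psi k))"
    by (rule sum_bell_overlap[symmetric])
  also have "\<dots> = (\<Sum>j\<in>{1..4}. if j = k then 1 else 0)"
    using assms by (intro sum.cong) (auto simp: bell_overlap_Psi)
  also have "\<dots> = 1"
    using assms by simp
  finally show ?thesis .
qed

lemma sum_sq_bell_overlap_le_hs_sq: "(\<Sum>k\<in>{1..4}. (bell_overlap k D)\<^sup>2) \<le> hs_sq D"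
proof -
  define r where "r x y = Re (D $ x $ y)" for x y
  define f where "f x y = (cmod (D $ x $ y))\<^sup>2" for x y
  have half_sq_le: "(p + q)\<^sup>2 / 2 \<le> p\<^sup>2 + q\<^sup>2" for p q :: real
    using zero_le_power2[of "p - q"] by (simp add: power2_eq_square field_simps)
  have r_le_f: "(r x y)\<^sup>2 \<le> f x y" for x y
    by (simp add: r_def f_def cmod_power2)
  have "(\<Sum>k\<in>{1..4}. (bell_overlap k D)\<^sup>2) =
      (r (0,0) (0,0) + r (1,1) (1,1))\<^sup>2 / 2 + (r (0,0) (1,1) + r (1,1) (0,0))\<^sup>2 / 2
       + (r (0,1) (0,1) + r (1,0) (1,0))\<^sup>2 / 2 + (r (0,1) (1,0) + r (1,0) (0,1))\<^sup>2 / 2"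
    unfolding atLeast1_atMost4_eq
    by (simp add: bell_overlap_eq r_def power2_eq_square field_simps del: One_nat_def)
  also have "\<dots> \<le> ((r (0,0) (0,0))\<^sup>2 + (r (1,1) (1,1))\<^sup>2)
       + ((r (0,0) (1,1))\<^sup>2 + (r (1,1) (0,0))\<^sup>2)
       + ((r (0,1) (0,1))\<^sup>2 + (r (1,0) (1,0))\<^sup>2)
       + ((r (0,1) (1,0))\<^sup>2 + (r (1,0) (0,1))\<^sup>2)"
    by (intro add_mono half_sq_le)
  also have "\<dots> \<le> (\<Sum>x\<in>UNIV. \<Sum>y\<in>UNIV. f x y)"
    using r_le_f[of "(0,0)" "(0,0)"] r_le_f[of "(1,1)" "(1,1)"] r_le_f[of "(0,0)" "(1,1)"]
      r_le_f[of "(1,1)" "(0,0)"] r_le_f[of "(0,1)" "(0,1)"] r_le_f[of "(1,0)" "(1,0)"]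
      r_le_f[of "(0,1)" "(1,0)"] r_le_f[of "(1,0)" "(0,1)"]
    unfolding UNIV_2x2_eq f_def by simp (smt (verit) zero_le_power2)
  finally show ?thesis by (simp add: hs_sq_def f_def)
qed

lemma qubit_state_entries:
  assumes "is_state (A :: qubit_op)"
  obtains a d z where "A$0$0 = of_real a" "A$1$1 = of_real d" "A$0$1 = z" "A$1$0 = cnj z"
    "0 \<le> a" "0 \<le> d" "a + d = 1" "(cmod z)\<^sup>2 \<le> a * d"
proof
  have pos: "positive_op A" and tr: "A$0$0 + A$1$1 = 1"
    using assms by (simp_all add: is_state_def mtrace_def UNIV_2_eq)
  show "A$0$0 = of_real (Re (A$0$0))" "A$1$1 = of_real (Re (A$1$1))"
    using positive_op_diag(1)[OF pos] by (simp_all add: complex_eq_iff)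
  show "A$1$0 = cnj (A$0$1)" by (rule positive_op_hermitian[OF pos])
  show "0 \<le> Re (A$0$0)" "0 \<le> Re (A$1$1)" by (rule positive_op_diag(2)[OF pos])+
  show "Re (A$0$0) + Re (A$1$1) = 1" using arg_cong[OF tr, of Re] by simp
  show "(cmod (A$0$1))\<^sup>2 \<le> Re (A$0$0) * Re (A$1$1)" by (rule positive_op_offdiag_le[OF pos])
qed simp

lemma bell_overlap_kron_le:
  assumes A: "is_state A" and B: "is_state B" and k: "k \<in> {1..4}"
  shows "bell_overlap k (kron A B) \<le> 1/2"
proof -
  obtain a d z where A_eq: "A$0$0 = of_real a" "A$1$1 = of_real d" "A$0$1 = z" "A$1$0 = cnj z"
    and a: "0 \<le> a" "0 \<le> d" "a + d = 1" "(cmod z)\<^sup>2 \<le> a * d"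
    using qubit_state_entries[OF A] .
  obtain b e w where B_eq: "B$0$0 = of_real b" "B$1$1 = of_real e" "B$0$1 = w" "B$1$0 = cnj w"
    and b: "0 \<le> b" "0 \<le> e" "b + e = 1" "(cmod w)\<^sup>2 \<le> b * e"
    using qubit_state_entries[OF B] .
  \<comment> \<open>AM-GM: \<open>2 |z| |w| \<le> 2 sqrt (a d b e)\<close> is below both \<open>a e + d b\<close> and \<open>a b + d e\<close>.\<close>
  define m where "m = cmod z * cmod w"
  have "m\<^sup>2 \<le> (a * d) * (b * e)"
    unfolding m_def power_mult_distrib using a b by (intro mult_mono) auto
  then have "m \<le> sqrt ((a * e) * (d * b))" "m \<le> sqrt ((a * b) * (d * e))"
    by (auto intro!: real_le_rsqrt simp: mult_ac)
  then have m_le: "2 * m \<le> a * e + d * b" "2 * m \<le> a * b + d * e"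
    using arith_geo_mean_sqrt[of "a * e" "d * b"] arith_geo_mean_sqrt[of "a * b" "d * e"] a b
    by auto
  have one: "a * b + a * e + d * b + d * e = 1"
    using a(3) b(3) by (metis distrib_left distrib_right mult_1 add.assoc)
  have "\<bar>Re (z * w)\<bar> \<le> m" "\<bar>Re (z * cnj w)\<bar> \<le> m"
    unfolding m_def by (metis abs_Re_le_cmod norm_mult complex_mod_cnj)+
  moreover have "bell_overlap 1 (kron A B) = (a * b + d * e + 2 * Re (z * w)) / 2"
    "bell_overlap 2 (kron A B) = (a * b + d * e - 2 * Re (z * w)) / 2"
    "bell_overlap 3 (kron A B) = (a * e + d * b + 2 * Re (z * cnj w)) / 2"
    "bell_overlap 4 (kron A B) = (a * e + d * b - 2 * Re (z * cnj w)) / 2"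
    by (simp_all add: bell_overlap_eq kron_def A_eq B_eq del: One_nat_def)
  moreover have "k = 1 \<or> k = 2 \<or> k = 3 \<or> k = 4" using k by auto
  ultimately show ?thesis using m_le one by (auto simp: abs_le_iff)
qed

lemma bell_overlap_le_half:
  assumes "disentangled \<rho>" "k \<in> {1..4}"
  shows "bell_overlap k \<rho> \<le> 1/2"
proof -
  have "convex hull product_states \<subseteq> bell_overlap k -` {..1/2}"
  proof (rule hull_minimal)
    show "product_states \<subseteq> bell_overlap k -` {..1/2}"
      using bell_overlap_kron_le[OF _ _ assms(2)] by (auto simp: product_states_def)
    show "convex (bell_overlap k -` {..1/2})"
      by (rule convex_linear_vimage[OF linear_bell_overlap]) simp
  qed
  then show ?thesis using assms(1) by (auto simp: disentangled_iff_convex_hull)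
qed

section \<open>The Hilbert-Schmidt distance to the Bell mixture\<close>

lemma sum_squares_ge_of_sum_zero:
  fixes x :: "'a \<Rightarrow> real"
  assumes "finite S" "i \<in> S" "(\<Sum>k\<in>S. x k) = 0" "x i \<le> -t" "0 \<le> t"
  shows "real (card S) * t\<^sup>2 \<le> (real (card S) - 1) * (\<Sum>k\<in>S. (x k)\<^sup>2)"
proof -
  let ?T = "S - {i}"
  define n where "n = real (card S)"
  define s where "s = (\<Sum>k\<in>?T. (x k)\<^sup>2)"
  have "1 \<le> card S"
    using assms(1,2) card_gt_0_iff[of S] by auto
  then have n_ge_1: "1 \<le> n" and card_T: "real (card ?T) = n - 1"
    using assms(1,2) by (simp_all add: n_def card_Diff_singleton of_nat_diff)
  have "x i = - (\<Sum>k\<in>?T. x k)"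
    using assms(1-3) sum.remove[of S i x] by simp
  then have "(x i)\<^sup>2 = (\<Sum>k\<in>?T. x k)\<^sup>2" by simp
  also have "\<dots> \<le> s * (n - 1)"
    unfolding s_def card_T[symmetric] by (rule sum_squared_le_sum_of_squares)
  finally have cs: "(x i)\<^sup>2 \<le> (n - 1) * s" by (simp add: mult.commute)
  have "t\<^sup>2 \<le> (- x i)\<^sup>2"
    by (rule power_mono) (use assms(4,5) in auto)
  then have "n * t\<^sup>2 \<le> n * (x i)\<^sup>2" using n_ge_1 by (simp add: mult_left_mono)
  also have "\<dots> \<le> (n - 1) * ((x i)\<^sup>2 + s)"
    using cs by (simp add: algebra_simps)
  also have "(x i)\<^sup>2 + s = (\<Sum>k\<in>S. (x k)\<^sup>2)"
    using assms(1,2) sum.remove[of S i "\<lambda>k. (x k)\<^sup>2"] by (simp add: s_def)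
  finally show ?thesis by (simp add: n_def)
qed

definition bell_mixture :: "nat \<Rightarrow> (nat \<Rightarrow> real) \<Rightarrow> op2" where
  "bell_mixture i lam = lam i *\<^sub>R Psi i + (\<Sum>j\<in>{1..4}-{i}. lam j *\<^sub>R Phi i j)"

lemma Re_mtrace_bell_mixture:
  assumes "i \<in> {1..4}"
  shows "Re (mtrace (bell_mixture i lam)) = (\<Sum>k\<in>{1..4}. lam k)"
proof -
  have "Re (mtrace (Phi i j)) = 1" if "j \<in> {1..4}" for j
    using assms that by (simp add: Phi_def Re_mtrace_add Re_mtrace_scaleR Re_mtrace_Psi)
  then have "Re (mtrace (bell_mixture i lam)) = lam i + (\<Sum>j\<in>{1..4}-{i}. lam j)"
    using assms
    by (simp add: bell_mixture_def Re_mtrace_add Re_mtrace_scaleR Re_mtrace_sum Re_mtrace_Psi)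
  then show ?thesis
    using assms sum.remove[of "{1..4}" i lam] by simp
qed

lemma bell_overlap_bell_mixture:
  assumes "i \<in> {1..4}"
  shows "bell_overlap i (bell_mixture i lam) = lam i + (\<Sum>j\<in>{1..4}-{i}. lam j) / 2"
  using assms
  by (simp add: bell_mixture_def linear_add[OF linear_bell_overlap]
      linear_scale[OF linear_bell_overlap] linear_sum[OF linear_bell_overlap]
      bell_overlap_Psi bell_overlap_Phi sum_divide_distrib)

lemma hs_sq_ge_of_disentangled:
  assumes "i \<in> {1..4}" "0 \<le> lam i" "(\<Sum>k\<in>{1..4}. lam k) = 1" "disentangled \<rho>"
  shows "(lam i)\<^sup>2 / 3 \<le> hs_sq (\<rho> - bell_mixture i lam)"
proof -
  define x where "x k = bell_overlap k (\<rho> - bell_mixture i lam)" for k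
  have x_diff: "x k = bell_overlap k \<rho> - bell_overlap k (bell_mixture i lam)" for k
    by (simp add: x_def linear_diff[OF linear_bell_overlap])
  have "(\<Sum>k\<in>{1..4}. x k) = Re (mtrace \<rho>) - Re (mtrace (bell_mixture i lam))"
    unfolding x_diff sum_subtractf sum_bell_overlap ..
  then have sum_x: "(\<Sum>k\<in>{1..4}. x k) = 0"
    using assms by (simp add: disentangled_def is_state_def Re_mtrace_bell_mixture)
  have "(\<Sum>j\<in>{1..4}-{i}. lam j) = 1 - lam i"
    using assms(1,3) sum.remove[of "{1..4}" i lam] by simp
  then have x_i: "x i \<le> - (lam i / 2)"
    using bell_overlap_le_half[OF assms(4,1)] bell_overlap_bell_mixture[OF assms(1), of lam]
    unfolding x_diff by linarith
  have "real (card {1..4::nat}) * (lam i / 2)\<^sup>2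
      \<le> (real (card {1..4::nat}) - 1) * (\<Sum>k\<in>{1..4}. (x k)\<^sup>2)"
    by (rule sum_squares_ge_of_sum_zero) (use assms(1,2) sum_x x_i in auto)
  then have "(lam i)\<^sup>2 / 3 \<le> (\<Sum>k\<in>{1..4}. (x k)\<^sup>2)"
    by (simp add: power_divide)
  also have "\<dots> \<le> hs_sq (\<rho> - bell_mixture i lam)"
    unfolding x_def by (rule sum_sq_bell_overlap_le_hs_sq)
  finally show ?thesis .
qed

lemma Werner_mixture_eq_sum_Phi:
  assumes "i \<in> {1..4}"
  shows "lam i *\<^sub>R Werner i (1/3) + (\<Sum>j\<in>{1..4}-{i}. lam j *\<^sub>R Phi i j)
    = (\<Sum>j\<in>{1..4}-{i}. (lam j + lam i / 3) *\<^sub>R Phi i j)"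
  using assms
  by (simp add: Werner_third_eq scaleR_sum_right scaleR_add_left sum.distrib add.commute)

lemma disentangled_Werner_mixture:
  assumes "i \<in> {1..4}" "\<forall>k\<in>{1..4}. 0 \<le> lam k" "(\<Sum>k\<in>{1..4}. lam k) = 1"
  shows "disentangled (lam i *\<^sub>R Werner i (1/3) + (\<Sum>j\<in>{1..4}-{i}. lam j *\<^sub>R Phi i j))"
  unfolding Werner_mixture_eq_sum_Phi[OF assms(1)]
proof (rule disentangled_convex_sum)
  have "card ({1..4::nat} - {i}) = 3"
    using assms(1) by (simp add: card_Diff_singleton)
  then show "(\<Sum>j\<in>{1..4}-{i}. lam j + lam i / 3) = 1"
    using assms(1,3) sum.remove[of "{1..4}" i lam] by (simp add: sum.distrib)
qed (use assms disentangled_Phi in auto)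

theorem proposition1:
  fixes i :: nat and lam :: "nat \<Rightarrow> real"
  assumes "i \<in> {1..4}"
    and "\<forall>k\<in>{1..4}. lam k \<ge> 0"
    and "(\<Sum>k\<in>{1..4}. lam k) = 1"
  defines "\<sigma> \<equiv> lam i *\<^sub>R Psi i + (\<Sum>j\<in>{1..4} - {i}. lam j *\<^sub>R Phi i j)"
    and "\<sigma>' \<equiv> lam i *\<^sub>R Werner i (1/3) + (\<Sum>j\<in>{1..4} - {i}. lam j *\<^sub>R Phi i j)"
  shows "disentangled \<sigma>'
         \<and> (\<forall>\<rho>. disentangled \<rho> \<longrightarrow> hs_sq (\<sigma>' - \<sigma>) \<le> hs_sq (\<rho> - \<sigma>))
         \<and> E_HS \<sigma> = (lam i)\<^sup>2 / 3"
proof -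
  have sep: "disentangled \<sigma>'"
    unfolding \<sigma>'_def using assms(1-3) by (rule disentangled_Werner_mixture)
  have "\<sigma>' - \<sigma> = lam i *\<^sub>R (Werner i (1/3) - Psi i)"
    by (simp add: \<sigma>'_def \<sigma>_def scaleR_diff_right)
  then have dist: "hs_sq (\<sigma>' - \<sigma>) = (lam i)\<^sup>2 / 3"
    using hs_sq_Werner_third_minus_Psi[OF assms(1)] by (simp add: hs_sq_scaleR)
  have lower: "(lam i)\<^sup>2 / 3 \<le> hs_sq (\<rho> - \<sigma>)" if "disentangled \<rho>" for \<rho>
    using hs_sq_ge_of_disentangled[OF assms(1) _ assms(3) that] assms(1,2)
    by (simp add: \<sigma>_def bell_mixture_def)
  have "E_HS \<sigma> = (lam i)\<^sup>2 / 3"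
    unfolding E_HS_def by (rule cInf_eq_minimum) (use sep dist lower in \<open>auto simp flip: dist\<close>)
  then show ?thesis
    using sep lower unfolding dist by blast
qed

end
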